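(* There do not exist properly immersed translating solitons in $\mathbb{H}^2\times\mathbb{R}$ contained inside a solid vertical cylinder $\overline{D}\times\mathbb{R}$, where $\overline{D}\subset\mathbb{H}^2$ is a closed geodesic disk of finite radius.
   Context: $\mathbb{H}^2\times\mathbb{R}$ carries the product metric $\langle\cdot,\cdot\rangle$ of the hyperbolic plane of curvature $-1$ and the real line; $\partial_z$ is the unit vertical field. An oriented immersed surface $M$ with unit normal $\eta$ and mean curvature $H_M$ (half the trace of the second fundamental form with respect to $\eta$) is a translating soliton if $H_M=\langle\eta,\partial_z\rangle$ at every point. *)

theory Defs
  imports "HOL-Analysis.Analysis"
begin

text \<open>Model: H^2 x R = {(x,y,z) : y > 0} in real^3, with the upper half-plane metric
  (dx^2+dy^2)/y^2 + dz^2. Coordinates: x = component 1, y = component 2, z = component 3.\<close>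

definition hdist :: "real \<times> real \<Rightarrow> real \<times> real \<Rightarrow> real" where
  "hdist p q = arcosh (1 + ((fst p - fst q)^2 + (snd p - snd q)^2) / (2 * snd p * snd q))"

definition closed_geodesic_disk :: "real \<times> real \<Rightarrow> real \<Rightarrow> (real \<times> real) set" where
  "closed_geodesic_disk c r = {p. snd p > 0 \<and> hdist p c \<le> r}"

definition Hmetric :: "real^3 \<Rightarrow> real^3 \<Rightarrow> real^3 \<Rightarrow> real" where
  "Hmetric P a b = (a$1 * b$1 + a$2 * b$2) / (P$2)^2 + a$3 * b$3"

text \<open>Christoffel symbols term Gamma(a,b) of the Levi-Civita connection of the product metric.\<close>
definition Christ :: "real^3 \<Rightarrow> real^3 \<Rightarrow> real^3 \<Rightarrow> real^3" where
  "Christ P a b = vector [- (a$1 * b$2 + a$2 * b$1) / P$2, (a$1 * b$1 - a$2 * b$2) / P$2, 0]"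

definition pu :: "(real \<times> real \<Rightarrow> 'b::real_normed_vector) \<Rightarrow> real \<times> real \<Rightarrow> 'b" where
  "pu X w = frechet_derivative X (at w) (1, 0)"

definition pv :: "(real \<times> real \<Rightarrow> 'b::real_normed_vector) \<Rightarrow> real \<times> real \<Rightarrow> 'b" where
  "pv X w = frechet_derivative X (at w) (0, 1)"

fun Cdiff :: "nat \<Rightarrow> (real \<times> real) set \<Rightarrow> (real \<times> real \<Rightarrow> real^3) \<Rightarrow> bool" where
  "Cdiff 0 W X = continuous_on W X"
| "Cdiff (Suc k) W X = (X differentiable_on W \<and> Cdiff k W (pu X) \<and> Cdiff k W (pv X))"

definition smooth_on2 :: "(real \<times> real) set \<Rightarrow> (real \<times> real \<Rightarrow> real^3) \<Rightarrow> bool" where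
  "smooth_on2 W X = (\<forall>k. Cdiff k W X)"

text \<open>Mean curvature (half the trace of the second fundamental form h(X,Y) = <nabla_X Y, N>)
  of the parametrized surface X at parameter w, with respect to the unit normal N.\<close>
definition mean_curv :: "(real \<times> real \<Rightarrow> real^3) \<Rightarrow> real^3 \<Rightarrow> real \<times> real \<Rightarrow> real" where
  "mean_curv X N w =
    (let P = X w; Xu = pu X w; Xv = pv X w;
         E = Hmetric P Xu Xu; F = Hmetric P Xu Xv; G = Hmetric P Xv Xv;
         e = Hmetric P (pu (pu X) w + Christ P Xu Xu) N;
         f = Hmetric P (pu (pv X) w + Christ P Xu Xv) N;
         g = Hmetric P (pv (pv X) w + Christ P Xv Xv) N
     in (e * G - 2 * f * F + g * E) / (2 * (E * G - F^2)))"

definition surface_chart :: "(real \<times> real) set \<Rightarrow> (real \<times> real \<Rightarrow> 'm::topological_space) \<Rightarrow> bool" where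
  "surface_chart W p = (open W \<and> open (p ` W) \<and> (\<exists>q. homeomorphism W (p ` W) p q))"

definition immersed_surface ::
  "((real \<times> real) set \<times> (real \<times> real \<Rightarrow> 'm::topological_space)) set \<Rightarrow> ('m \<Rightarrow> real^3) \<Rightarrow> bool" where
  "immersed_surface A F =
    ((\<forall>(W, p) \<in> A. surface_chart W p \<and> smooth_on2 W (F \<circ> p) \<and>
        (\<forall>w \<in> W. \<forall>a b. a *\<^sub>R pu (F \<circ> p) w + b *\<^sub>R pv (F \<circ> p) w = 0 \<longrightarrow> a = 0 \<and> b = 0))
     \<and> (\<Union>(W, p) \<in> A. p ` W) = UNIV
     \<and> (\<forall>m. (F m)$2 > 0))"

definition unit_normal ::
  "((real \<times> real) set \<times> (real \<times> real \<Rightarrow> 'm::topological_space)) set \<Rightarrow> ('m \<Rightarrow> real^3) \<Rightarrow> ('m \<Rightarrow> real^3) \<Rightarrow> bool" where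
  "unit_normal A F \<eta> =
    (continuous_on UNIV \<eta> \<and> (\<forall>m. Hmetric (F m) (\<eta> m) (\<eta> m) = 1) \<and>
     (\<forall>(W, p) \<in> A. \<forall>w \<in> W. Hmetric (F (p w)) (\<eta> (p w)) (pu (F \<circ> p) w) = 0 \<and>
                              Hmetric (F (p w)) (\<eta> (p w)) (pv (F \<circ> p) w) = 0))"

text \<open>Translating soliton: H = <eta, d/dz> = third component of eta.\<close>
definition translating_soliton ::
  "((real \<times> real) set \<times> (real \<times> real \<Rightarrow> 'm::topological_space)) set \<Rightarrow> ('m \<Rightarrow> real^3) \<Rightarrow> ('m \<Rightarrow> real^3) \<Rightarrow> bool" where
  "translating_soliton A F \<eta> =
    (\<forall>(W, p) \<in> A. \<forall>w \<in> W. mean_curv (F \<circ> p) (\<eta> (p w)) w = (\<eta> (p w))$3)"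

definition proper_into_H2R :: "('m::topological_space \<Rightarrow> real^3) \<Rightarrow> bool" where
  "proper_into_H2R F = (\<forall>K. compact K \<and> K \<subseteq> {q. q$2 > 0} \<longrightarrow> compact (F -` K))"

end

theory Submission
  imports Defs
begin

(* On M consider the barrier Phi = 1/y + h(z) with h(z) = - delta sqrt(1 + z^2) and
  4 delta y <= 1 on the cylinder. There y is pinched between positive constants, so the
  superlevel sets of Phi have bounded height; by properness they are compact and Phi attains
  its maximum on M. At the maximum the unit normal is proportional to the metric gradient
  (0, -1, h'(z)) of Phi and the Hessian of Phi along M is negative semidefinite, so its trace
  with respect to the first fundamental form is <= 0. Expressing the Hessian through the
  second fundamental form, the soliton equation H = <eta, d/dz> makes this trace equal to
  2 (h'(z) + 1/y) (EG - F^2) + (h''(z) - 1/y) S with 0 <= S <= EG - F^2, which is positive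
  because |h'|, |h''| <= delta <= 1/(4y). *)

section \<open>Calculus in a chart\<close>

lemma has_derivative_partials:
  fixes Y :: "real \<times> real \<Rightarrow> 'b::real_normed_vector"
  assumes "Y differentiable at w"
  shows "(Y has_derivative (\<lambda>h. fst h *\<^sub>R pu Y w + snd h *\<^sub>R pv Y w)) (at w)"
proof -
  let ?D = "frechet_derivative Y (at w)"
  have D: "(Y has_derivative ?D) (at w)"
    using assms frechet_derivative_works by blast
  have lin: "linear ?D"
    using has_derivative_linear[OF D] .
  have "?D h = fst h *\<^sub>R pu Y w + snd h *\<^sub>R pv Y w" for h
  proof -
    have "?D h = ?D (fst h *\<^sub>R (1, 0) + snd h *\<^sub>R (0, 1))"
      by (cases h) simp
    also have "\<dots> = fst h *\<^sub>R ?D (1, 0) + snd h *\<^sub>R ?D (0, 1)"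
      by (simp only: linear_add[OF lin] linear_scale[OF lin])
    finally show ?thesis
      by (simp add: pu_def pv_def)
  qed
  then show ?thesis
    using D by (metis (no_types, lifting) ext)
qed

lemma has_vector_derivative_along_line:
  fixes Y :: "real \<times> real \<Rightarrow> 'b::real_normed_vector"
  assumes "Y differentiable at (w + t *\<^sub>R v)"
  shows "((\<lambda>s. Y (w + s *\<^sub>R v)) has_vector_derivative
           fst v *\<^sub>R pu Y (w + t *\<^sub>R v) + snd v *\<^sub>R pv Y (w + t *\<^sub>R v)) (at t)"
proof -
  have "((\<lambda>s. w + s *\<^sub>R v) has_derivative (\<lambda>s. s *\<^sub>R v)) (at t)"
    by (auto intro!: derivative_eq_intros)
  from diff_chain_at[OF this has_derivative_partials[OF assms]] show ?thesis
    unfolding has_vector_derivative_def o_def by (simp add: scaleR_add_right)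
qed

lemma has_real_derivative_vec_nth:
  fixes \<gamma> :: "real \<Rightarrow> real^'n"
  assumes "(\<gamma> has_vector_derivative \<gamma>') (at t)"
  shows "((\<lambda>s. \<gamma> s $ i) has_real_derivative \<gamma>' $ i) (at t)"
  using bounded_linear.has_vector_derivative[OF bounded_linear_vec_nth assms]
  by (simp add: has_real_derivative_iff_has_vector_derivative)

lemma has_real_derivative_pu:
  fixes Y :: "real \<times> real \<Rightarrow> real^'n"
  assumes "Y differentiable at (a + s, b)"
  shows "((\<lambda>s. Y (a + s, b) $ i) has_real_derivative pu Y (a + s, b) $ i) (at s)"
  using has_real_derivative_vec_nth[OF has_vector_derivative_along_line[of Y "(a, b)" s "(1, 0)"]] assms
  by simp

lemma has_real_derivative_pv:
  fixes Y :: "real \<times> real \<Rightarrow> real^'n"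
  assumes "Y differentiable at (a, b + t)"
  shows "((\<lambda>t. Y (a, b + t) $ i) has_real_derivative pv Y (a, b + t) $ i) (at t)"
  using has_real_derivative_vec_nth[OF has_vector_derivative_along_line[of Y "(a, b)" t "(0, 1)"]] assms
  by simp

lemma open_contains_line_segment:
  fixes w v :: "'a::real_normed_vector"
  assumes "open W" "w \<in> W"
  obtains d where "d > 0" "\<And>t. \<bar>t\<bar> < d \<Longrightarrow> w + t *\<^sub>R v \<in> W"
proof -
  obtain \<rho> where \<rho>: "\<rho> > 0" "ball w \<rho> \<subseteq> W"
    using assms open_contains_ball by blast
  define d where "d = \<rho> / (norm v + 1)"
  have "w + t *\<^sub>R v \<in> W" if "\<bar>t\<bar> < d" for t
  proof -
    have "dist w (w + t *\<^sub>R v) = \<bar>t\<bar> * norm v"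
      by (simp add: dist_norm)
    also have "\<dots> \<le> \<bar>t\<bar> * (norm v + 1)"
      by (simp add: mult_left_mono)
    also have "\<dots> < d * (norm v + 1)"
      using that by (simp add: add_nonneg_pos mult_strict_right_mono)
    also have "\<dots> = \<rho>"
      by (simp add: d_def add_nonneg_pos less_imp_neq[symmetric])
    finally show ?thesis
      using \<rho> by auto
  qed
  moreover have "d > 0"
    using \<rho> by (simp add: d_def add_nonneg_pos)
  ultimately show ?thesis
    using that by blast
qed

lemma double_difference_mean_value:
  fixes f f1 f12 :: "real \<Rightarrow> real \<Rightarrow> real"
  assumes h: "h > 0"
    and f1: "\<And>s t. 0 \<le> s \<Longrightarrow> s \<le> h \<Longrightarrow> 0 \<le> t \<Longrightarrow> t \<le> h \<Longrightarrow>
               ((\<lambda>s. f s t) has_real_derivative f1 s t) (at s)"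
    and f12: "\<And>s t. 0 \<le> s \<Longrightarrow> s \<le> h \<Longrightarrow> 0 \<le> t \<Longrightarrow> t \<le> h \<Longrightarrow>
               (f1 s has_real_derivative f12 s t) (at t)"
  obtains \<xi> \<eta> where "0 < \<xi>" "\<xi> < h" "0 < \<eta>" "\<eta> < h"
    "f h h - f h 0 - f 0 h + f 0 0 = h * h * f12 \<xi> \<eta>"
proof -
  have "\<exists>\<xi>>0. \<xi> < h \<and> (f h h - f h 0) - (f 0 h - f 0 0) = (h - 0) * (f1 \<xi> h - f1 \<xi> 0)"
    by (rule MVT2[OF h]) (auto intro!: DERIV_diff f1)
  then obtain \<xi> where \<xi>: "0 < \<xi>" "\<xi> < h"
    "(f h h - f h 0) - (f 0 h - f 0 0) = (h - 0) * (f1 \<xi> h - f1 \<xi> 0)"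
    by blast
  have "\<exists>\<eta>>0. \<eta> < h \<and> f1 \<xi> h - f1 \<xi> 0 = (h - 0) * f12 \<xi> \<eta>"
    by (rule MVT2[OF h]) (use \<xi> in \<open>auto intro!: f12\<close>)
  then obtain \<eta> where \<eta>: "0 < \<eta>" "\<eta> < h" "f1 \<xi> h - f1 \<xi> 0 = (h - 0) * f12 \<xi> \<eta>"
    by blast
  show ?thesis
    by (rule that[OF \<xi>(1,2) \<eta>(1,2)]) (use \<xi>(3) \<eta>(3) in \<open>simp add: algebra_simps\<close>)
qed

lemma mixed_partials_meet_in_square:
  fixes X :: "real \<times> real \<Rightarrow> real^'n"
  assumes h: "h > 0" and W: "open W"
    and square: "\<And>s t. 0 \<le> s \<Longrightarrow> s \<le> h \<Longrightarrow> 0 \<le> t \<Longrightarrow> t \<le> h \<Longrightarrow> (x0 + s, y0 + t) \<in> W"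
    and X: "X differentiable_on W" and Xu: "pu X differentiable_on W" and Xv: "pv X differentiable_on W"
  obtains \<xi> \<eta> \<sigma> \<tau> where "0 < \<xi>" "\<xi> < h" "0 < \<eta>" "\<eta> < h" "0 < \<sigma>" "\<sigma> < h" "0 < \<tau>" "\<tau> < h"
    "pv (pu X) (x0 + \<xi>, y0 + \<eta>) $ i = pu (pv X) (x0 + \<sigma>, y0 + \<tau>) $ i"
proof -
  have diff: "Y differentiable at (x0 + s, y0 + t)"
    if "Y differentiable_on W" "0 \<le> s" "s \<le> h" "0 \<le> t" "t \<le> h" for Y :: "real \<times> real \<Rightarrow> real^'n" and s t
    using that square W differentiable_on_eq_differentiable_at by blast
  obtain \<xi> \<eta> where \<xi>\<eta>: "0 < \<xi>" "\<xi> < h" "0 < \<eta>" "\<eta> < h"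
    "X (x0 + h, y0 + h) $ i - X (x0 + h, y0 + 0) $ i - X (x0 + 0, y0 + h) $ i + X (x0 + 0, y0 + 0) $ i
      = h * h * pv (pu X) (x0 + \<xi>, y0 + \<eta>) $ i"
    by (rule double_difference_mean_value[of h "\<lambda>s t. X (x0 + s, y0 + t) $ i"
          "\<lambda>s t. pu X (x0 + s, y0 + t) $ i"])
      (use h in \<open>auto intro!: has_real_derivative_pu has_real_derivative_pv diff X Xu\<close>)
  obtain \<tau> \<sigma> where \<tau>\<sigma>: "0 < \<tau>" "\<tau> < h" "0 < \<sigma>" "\<sigma> < h"
    "X (x0 + h, y0 + h) $ i - X (x0 + 0, y0 + h) $ i - X (x0 + h, y0 + 0) $ i + X (x0 + 0, y0 + 0) $ i
      = h * h * pu (pv X) (x0 + \<sigma>, y0 + \<tau>) $ i"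
    by (rule double_difference_mean_value[of h "\<lambda>t s. X (x0 + s, y0 + t) $ i"
          "\<lambda>t s. pv X (x0 + s, y0 + t) $ i"])
      (use h in \<open>auto intro!: has_real_derivative_pu has_real_derivative_pv diff X Xv\<close>)
  have "h * h * pv (pu X) (x0 + \<xi>, y0 + \<eta>) $ i = h * h * pu (pv X) (x0 + \<sigma>, y0 + \<tau>) $ i"
    using \<xi>\<eta>(5) \<tau>\<sigma>(5) by (simp add: algebra_simps)
  with h show ?thesis
    using that \<xi>\<eta>(1-4) \<tau>\<sigma>(1-4) by simp
qed

lemma pv_pu_eq_pu_pv:
  fixes X :: "real \<times> real \<Rightarrow> real^'n"
  assumes W: "open W" "w \<in> W" and X: "X differentiable_on W"
    and Xu: "pu X differentiable_on W" and Xv: "pv X differentiable_on W"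
    and Xuv: "continuous_on W (pv (pu X))" and Xvu: "continuous_on W (pu (pv X))"
  shows "pv (pu X) w = pu (pv X) w"
proof -
  obtain x0 y0 where w: "w = (x0, y0)"
    by fastforce
  have close: "\<bar>pv (pu X) w $ i - pu (pv X) w $ i\<bar> < 2 * e" if e: "e > 0" for i e
  proof -
    obtain d1 where d1: "d1 > 0" "\<And>w'. w' \<in> W \<Longrightarrow> dist w' w < d1 \<Longrightarrow> dist (pv (pu X) w') (pv (pu X) w) < e"
      using Xuv W(2) e unfolding continuous_on_iff by metis
    obtain d2 where d2: "d2 > 0" "\<And>w'. w' \<in> W \<Longrightarrow> dist w' w < d2 \<Longrightarrow> dist (pu (pv X) w') (pu (pv X) w) < e"
      using Xvu W(2) e unfolding continuous_on_iff by metis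
    obtain r where r: "r > 0" "ball w r \<subseteq> W"
      using W open_contains_ball by blast
    define h where "h = min r (min d1 d2) / 4"
    have near: "(x0 + s, y0 + t) \<in> W \<and> dist (x0 + s, y0 + t) w < min r (min d1 d2)"
      if "0 \<le> s" "s \<le> h" "0 \<le> t" "t \<le> h" for s t
    proof -
      have "dist (x0 + s, y0 + t) w \<le> \<bar>s\<bar> + \<bar>t\<bar>"
        using sqrt_sum_squares_le_sum_abs[of s t] by (simp add: w dist_Pair_Pair dist_real_def)
      also have "\<dots> < min r (min d1 d2)"
        using that r d1 d2 by (simp add: h_def)
      finally show ?thesis
        using r by (auto simp: dist_commute)
    qed
    have "h > 0"
      using r d1 d2 by (simp add: h_def)
    then obtain \<xi> \<eta> \<sigma> \<tau> where in_square: "0 < \<xi>" "\<xi> < h" "0 < \<eta>" "\<eta> < h" "0 < \<sigma>" "\<sigma> < h" "0 < \<tau>" "\<tau> < h"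
      and meet: "pv (pu X) (x0 + \<xi>, y0 + \<eta>) $ i = pu (pv X) (x0 + \<sigma>, y0 + \<tau>) $ i"
      using mixed_partials_meet_in_square[OF _ W(1) _ X Xu Xv] near by blast
    have component_close: "\<bar>Z w' $ i - Z w $ i\<bar> < e" if "dist (Z w') (Z w) < e" for Z :: "real \<times> real \<Rightarrow> real^'n" and w'
      using that component_le_norm_cart[of "Z w' - Z w" i] by (simp add: dist_norm)
    have "\<bar>pv (pu X) (x0 + \<xi>, y0 + \<eta>) $ i - pv (pu X) w $ i\<bar> < e"
      using in_square near[of \<xi> \<eta>] by (intro component_close d1(2)) auto
    moreover have "\<bar>pu (pv X) (x0 + \<sigma>, y0 + \<tau>) $ i - pu (pv X) w $ i\<bar> < e"
      using in_square near[of \<sigma> \<tau>] by (intro component_close d2(2)) auto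
    ultimately show ?thesis
      using meet by linarith
  qed
  have "pv (pu X) w $ i = pu (pv X) w $ i" for i
    using close[of "\<bar>pv (pu X) w $ i - pu (pv X) w $ i\<bar> / 2" i] by fastforce
  then show ?thesis
    by (simp add: vec_eq_iff)
qed

lemma Cdiff_2D:
  assumes "Cdiff 2 W X"
  shows "X differentiable_on W" "pu X differentiable_on W" "pv X differentiable_on W"
    "continuous_on W (pv (pu X))" "continuous_on W (pu (pv X))"
  using assms by (simp_all add: numeral_2_eq_2)

lemma has_vector_derivative_along_line_2:
  fixes Y :: "real \<times> real \<Rightarrow> 'b::real_normed_vector"
  assumes "pu Y differentiable at w" "pv Y differentiable at w" and sym: "pv (pu Y) w = pu (pv Y) w"
  shows "((\<lambda>s. a *\<^sub>R pu Y (w + s *\<^sub>R (a, b)) + b *\<^sub>R pv Y (w + s *\<^sub>R (a, b))) has_vector_derivative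
           a\<^sup>2 *\<^sub>R pu (pu Y) w + (2 * a * b) *\<^sub>R pu (pv Y) w + b\<^sup>2 *\<^sub>R pv (pv Y) w) (at 0)"
proof -
  have "((\<lambda>s. Z (w + s *\<^sub>R (a, b))) has_vector_derivative a *\<^sub>R pu Z w + b *\<^sub>R pv Z w) (at 0)"
    if "Z differentiable at w" for Z :: "real \<times> real \<Rightarrow> 'b"
    using has_vector_derivative_along_line[of Z w 0 "(a, b)"] that by (simp add: zero_prod_def[symmetric])
  then have "((\<lambda>s. a *\<^sub>R pu Y (w + s *\<^sub>R (a, b)) + b *\<^sub>R pv Y (w + s *\<^sub>R (a, b))) has_vector_derivative
      a *\<^sub>R (a *\<^sub>R pu (pu Y) w + b *\<^sub>R pv (pu Y) w) + b *\<^sub>R (a *\<^sub>R pu (pv Y) w + b *\<^sub>R pv (pv Y) w)) (at 0)"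
    using assms(1,2)
    by (intro has_vector_derivative_add bounded_linear.has_vector_derivative[OF bounded_linear_scaleR_right])
  moreover have "a *\<^sub>R (a *\<^sub>R pu (pu Y) w + b *\<^sub>R pv (pu Y) w) + b *\<^sub>R (a *\<^sub>R pu (pv Y) w + b *\<^sub>R pv (pv Y) w)
      = a\<^sup>2 *\<^sub>R pu (pu Y) w + (2 * a * b) *\<^sub>R pu (pv Y) w + b\<^sup>2 *\<^sub>R pv (pv Y) w"
  proof -
    have "(a * b) *\<^sub>R z + (a * b) *\<^sub>R z = (2 * a * b) *\<^sub>R z" for z :: 'b
      by (metis mult_2 scaleR_add_left mult.assoc)
    then show ?thesis
      by (simp add: sym scaleR_add_right power2_eq_square mult.commute)
  qed
  ultimately show ?thesis
    by simp
qed

lemma DERIV_local_max_second: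
  fixes \<psi> \<psi>' :: "real \<Rightarrow> real"
  assumes d: "d > 0"
    and \<psi>: "\<And>t. \<bar>t\<bar> < d \<Longrightarrow> (\<psi> has_real_derivative \<psi>' t) (at t)"
    and \<psi>': "(\<psi>' has_real_derivative c) (at 0)"
    and max: "\<And>t. \<bar>t\<bar> < d \<Longrightarrow> \<psi> t \<le> \<psi> 0"
  shows "\<psi>' 0 = 0" and "c \<le> 0"
proof -
  show "\<psi>' 0 = 0"
    by (rule DERIV_local_max[OF \<psi> d]) (use d max in auto)
  show "c \<le> 0"
  proof (rule ccontr)
    assume "\<not> c \<le> 0"
    then obtain e where e: "e > 0" "\<And>h. h > 0 \<Longrightarrow> h < e \<Longrightarrow> \<psi>' 0 < \<psi>' h"
      using DERIV_pos_inc_right[OF \<psi>'] by force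
    define t where "t = min e d / 2"
    have t: "0 < t" "t < e" "t < d"
      using e d by (auto simp: t_def)
    have "\<exists>z>0. z < t \<and> \<psi> t - \<psi> 0 = (t - 0) * \<psi>' z"
      by (rule MVT2[OF t(1)]) (use t in \<open>auto intro!: \<psi>\<close>)
    then obtain z where z: "0 < z" "z < t" "\<psi> t - \<psi> 0 = t * \<psi>' z"
      by auto
    have "\<psi>' z > 0"
      using e(2)[of z] z t \<open>\<psi>' 0 = 0\<close> by simp
    then have "\<psi> t > \<psi> 0"
      using z t mult_pos_pos[of t "\<psi>' z"] by linarith
    with max[of t] t show False
      by simp
  qed
qed

section \<open>The barrier function\<close>

definition hump :: "real \<Rightarrow> real \<Rightarrow> real" where
  "hump \<delta> z = - \<delta> * sqrt (1 + z\<^sup>2)"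

definition hump' :: "real \<Rightarrow> real \<Rightarrow> real" where
  "hump' \<delta> z = - \<delta> * z / sqrt (1 + z\<^sup>2)"

definition hump'' :: "real \<Rightarrow> real \<Rightarrow> real" where
  "hump'' \<delta> z = - \<delta> / ((1 + z\<^sup>2) * sqrt (1 + z\<^sup>2))"

lemma has_real_derivative_sqrt_1_plus_square:
  "((\<lambda>z. sqrt (1 + z\<^sup>2)) has_real_derivative z / sqrt (1 + z\<^sup>2)) (at z)"
proof -
  have "0 < 1 + z\<^sup>2"
    by (simp add: add_pos_nonneg)
  have "((\<lambda>z. 1 + z\<^sup>2) has_real_derivative 2 * z) (at z)"
    by (auto intro!: derivative_eq_intros)
  from DERIV_chain2[OF DERIV_real_sqrt[OF \<open>0 < 1 + z\<^sup>2\<close>] this] show ?thesis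
    by (simp add: field_simps)
qed

lemma has_real_derivative_hump: "(hump \<delta> has_real_derivative hump' \<delta> z) (at z)"
  using DERIV_cmult[OF has_real_derivative_sqrt_1_plus_square, of "- \<delta>"]
  by (simp add: hump_def[abs_def] hump'_def)

lemma has_real_derivative_hump': "(hump' \<delta> has_real_derivative hump'' \<delta> z) (at z)"
proof -
  define t where "t = sqrt (1 + z\<^sup>2)"
  have t: "t > 0" "t * t = 1 + z\<^sup>2"
    by (simp_all add: t_def add_pos_nonneg)
  have "((\<lambda>z. - \<delta> * (z / sqrt (1 + z\<^sup>2))) has_real_derivative
          - \<delta> * ((1 * t - z * (z / t)) / (t * t))) (at z)"
    unfolding t_def
    by (intro DERIV_cmult DERIV_divide DERIV_ident has_real_derivative_sqrt_1_plus_square)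
       (use t in \<open>simp add: t_def\<close>)
  moreover have "- \<delta> * ((1 * t - z * (z / t)) / (t * t)) = hump'' \<delta> z"
  proof -
    have "1 * t - z * (z / t) = 1 / t"
      using t by (simp add: field_simps power2_eq_square)
    then show ?thesis
      unfolding hump''_def t_def[symmetric] using t by (simp add: field_simps)
  qed
  ultimately show ?thesis
    by (simp add: hump'_def[abs_def])
qed

lemma abs_hump'_le: "0 \<le> \<delta> \<Longrightarrow> \<bar>hump' \<delta> z\<bar> \<le> \<delta>"
proof -
  assume \<delta>: "0 \<le> \<delta>"
  have "\<bar>z\<bar> \<le> sqrt (1 + z\<^sup>2)"
    by (rule real_le_rsqrt) simp
  then have "\<bar>z\<bar> / sqrt (1 + z\<^sup>2) \<le> 1"
    by (simp add: add_pos_nonneg)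
  then show ?thesis
    using \<delta> mult_left_le[of "\<bar>z\<bar> / sqrt (1 + z\<^sup>2)" \<delta>] by (simp add: hump'_def abs_mult)
qed

lemma abs_hump''_le: "0 \<le> \<delta> \<Longrightarrow> \<bar>hump'' \<delta> z\<bar> \<le> \<delta>"
proof -
  assume \<delta>: "0 \<le> \<delta>"
  have "1 \<le> (1 + z\<^sup>2) * sqrt (1 + z\<^sup>2)"
    using mult_mono[of 1 "1 + z\<^sup>2" 1 "sqrt (1 + z\<^sup>2)"] by simp
  then have "\<delta> / ((1 + z\<^sup>2) * sqrt (1 + z\<^sup>2)) \<le> \<delta>"
    using \<delta> by (simp add: divide_le_eq mult_le_cancel_left1)
  then show ?thesis
    using \<delta> \<open>1 \<le> _\<close> by (simp add: hump''_def abs_mult)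
qed

lemma hump_le: "0 \<le> \<delta> \<Longrightarrow> hump \<delta> z \<le> - \<delta> * \<bar>z\<bar>"
  using mult_left_mono[OF real_le_rsqrt[of "\<bar>z\<bar>" "1 + z\<^sup>2"], of \<delta>] by (simp add: hump_def)

definition barrier :: "real \<Rightarrow> real^3 \<Rightarrow> real" where
  "barrier \<delta> P = 1 / P$2 + hump \<delta> (P$3)"

text \<open>The gradient of \<^term>\<open>barrier \<delta>\<close> with respect to the metric \<^term>\<open>Hmetric P\<close>.\<close>
definition barrier_grad :: "real \<Rightarrow> real^3 \<Rightarrow> real^3" where
  "barrier_grad \<delta> P = vector [0, -1, hump' \<delta> (P$3)]"

text \<open>\<^term>\<open>barrier_hess \<delta> P T T S\<close> is the second derivative of \<^term>\<open>barrier \<delta>\<close> along a curve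
  through \<^term>\<open>P\<close> with velocity \<^term>\<open>T\<close> and acceleration \<^term>\<open>S\<close>; the second slot polarises it.\<close>
definition barrier_hess :: "real \<Rightarrow> real^3 \<Rightarrow> real^3 \<Rightarrow> real^3 \<Rightarrow> real^3 \<Rightarrow> real" where
  "barrier_hess \<delta> P T T' S =
     - S$2 / (P$2)\<^sup>2 + 2 * T$2 * T'$2 / (P$2)^3 + hump'' \<delta> (P$3) * T$3 * T'$3 + hump' \<delta> (P$3) * S$3"

lemma barrier_has_derivative_along:
  fixes \<gamma> :: "real \<Rightarrow> real^3"
  assumes \<gamma>: "(\<gamma> has_vector_derivative \<gamma>') (at t)" and y: "\<gamma> t $ 2 \<noteq> 0"
  shows "((\<lambda>s. barrier \<delta> (\<gamma> s)) has_real_derivative Hmetric (\<gamma> t) (barrier_grad \<delta> (\<gamma> t)) \<gamma>') (at t)"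
proof -
  note \<gamma>2 = has_real_derivative_vec_nth[OF \<gamma>, of 2] and \<gamma>3 = has_real_derivative_vec_nth[OF \<gamma>, of 3]
  have "((\<lambda>s. 1 / \<gamma> s $ 2 + hump \<delta> (\<gamma> s $ 3)) has_real_derivative
          (0 * \<gamma> t $ 2 - 1 * \<gamma>' $ 2) / (\<gamma> t $ 2 * \<gamma> t $ 2) + hump' \<delta> (\<gamma> t $ 3) * \<gamma>' $ 3) (at t)"
    by (intro DERIV_add DERIV_divide DERIV_const \<gamma>2 DERIV_chain2[OF has_real_derivative_hump \<gamma>3] y)
  then show ?thesis
    by (simp add: barrier_def[abs_def] Hmetric_def barrier_grad_def power2_eq_square)
qed

lemma barrier_grad_has_derivative_along:
  fixes \<gamma> \<tau> :: "real \<Rightarrow> real^3"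
  assumes \<gamma>: "(\<gamma> has_vector_derivative \<gamma>') (at t)" and \<tau>: "(\<tau> has_vector_derivative \<tau>') (at t)"
    and y: "\<gamma> t $ 2 \<noteq> 0"
  shows "((\<lambda>s. Hmetric (\<gamma> s) (barrier_grad \<delta> (\<gamma> s)) (\<tau> s)) has_real_derivative
           barrier_hess \<delta> (\<gamma> t) \<gamma>' (\<tau> t) \<tau>') (at t)"
proof -
  note \<gamma>2 = has_real_derivative_vec_nth[OF \<gamma>, of 2] and \<gamma>3 = has_real_derivative_vec_nth[OF \<gamma>, of 3]
  note \<tau>2 = has_real_derivative_vec_nth[OF \<tau>, of 2] and \<tau>3 = has_real_derivative_vec_nth[OF \<tau>, of 3]
  have "((\<lambda>s. - (\<tau> s $ 2 / (\<gamma> s $ 2 * \<gamma> s $ 2)) + hump' \<delta> (\<gamma> s $ 3) * \<tau> s $ 3) has_real_derivative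
          - ((\<tau>' $ 2 * (\<gamma> t $ 2 * \<gamma> t $ 2) - \<tau> t $ 2 * (\<gamma>' $ 2 * \<gamma> t $ 2 + \<gamma>' $ 2 * \<gamma> t $ 2))
             / ((\<gamma> t $ 2 * \<gamma> t $ 2) * (\<gamma> t $ 2 * \<gamma> t $ 2)))
          + (hump'' \<delta> (\<gamma> t $ 3) * \<gamma>' $ 3 * \<tau> t $ 3 + \<tau>' $ 3 * hump' \<delta> (\<gamma> t $ 3))) (at t)"
    (is "(_ has_real_derivative ?D) _")
    by (intro DERIV_add DERIV_minus DERIV_divide DERIV_mult \<gamma>2 \<tau>2 \<tau>3
          DERIV_chain2[OF has_real_derivative_hump' \<gamma>3]) (use y in simp)
  moreover have "(\<lambda>s. Hmetric (\<gamma> s) (barrier_grad \<delta> (\<gamma> s)) (\<tau> s))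
      = (\<lambda>s. - (\<tau> s $ 2 / (\<gamma> s $ 2 * \<gamma> s $ 2)) + hump' \<delta> (\<gamma> s $ 3) * \<tau> s $ 3)"
    by (simp add: fun_eq_iff Hmetric_def barrier_grad_def power2_eq_square)
  moreover have "?D = barrier_hess \<delta> (\<gamma> t) \<gamma>' (\<tau> t) \<tau>'"
    using y by (simp add: barrier_hess_def field_simps power2_eq_square power3_eq_cube)
  ultimately show ?thesis
    by simp
qed

lemma barrier_hess_quadratic:
  "barrier_hess \<delta> P (a *\<^sub>R U + b *\<^sub>R V) (a *\<^sub>R U + b *\<^sub>R V) (a\<^sup>2 *\<^sub>R A + (2 * a * b) *\<^sub>R M + b\<^sup>2 *\<^sub>R B)
   = a\<^sup>2 * barrier_hess \<delta> P U U A + 2 * a * b * barrier_hess \<delta> P U V M + b\<^sup>2 * barrier_hess \<delta> P V V B"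
  by (simp add: barrier_hess_def algebra_simps power2_eq_square add_divide_distrib diff_divide_distrib)

lemma barrier_hess_decomposition:
  assumes "P$2 \<noteq> 0" "c \<noteq> 0"
  shows "barrier_hess \<delta> P T T' S =
    Hmetric P (S + Christ P T T') (c *\<^sub>R barrier_grad \<delta> P) / c + Hmetric P T T' / P$2
    + (hump'' \<delta> (P$3) - 1 / P$2) * T$3 * T'$3"
  using assms
  by (simp add: barrier_hess_def Hmetric_def Christ_def barrier_grad_def field_simps power2_eq_square
      power3_eq_cube)

lemma barrier_max_in_chart:
  fixes X :: "real \<times> real \<Rightarrow> real^3" and a b :: real
  assumes W: "open W" "w \<in> W" and X: "Cdiff 2 W X"
    and pos: "\<forall>w'\<in>W. X w' $ 2 > 0"
    and max: "\<forall>w'\<in>W. barrier \<delta> (X w') \<le> barrier \<delta> (X w)"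
  defines "T \<equiv> a *\<^sub>R pu X w + b *\<^sub>R pv X w"
    and "S \<equiv> a\<^sup>2 *\<^sub>R pu (pu X) w + (2 * a * b) *\<^sub>R pu (pv X) w + b\<^sup>2 *\<^sub>R pv (pv X) w"
  shows "Hmetric (X w) (barrier_grad \<delta> (X w)) T = 0" and "barrier_hess \<delta> (X w) T T S \<le> 0"
proof -
  note X' = Cdiff_2D[OF X]
  obtain d where d: "d > 0" and on_line: "\<And>t. \<bar>t\<bar> < d \<Longrightarrow> w + t *\<^sub>R (a, b) \<in> W"
    using open_contains_line_segment[OF W] by blast
  define \<gamma> where "\<gamma> t = X (w + t *\<^sub>R (a, b))" for t
  define \<tau> where "\<tau> t = a *\<^sub>R pu X (w + t *\<^sub>R (a, b)) + b *\<^sub>R pv X (w + t *\<^sub>R (a, b))" for t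
  have \<gamma>': "(\<gamma> has_vector_derivative \<tau> t) (at t)" if "\<bar>t\<bar> < d" for t
    unfolding \<gamma>_def[abs_def] \<tau>_def
    using has_vector_derivative_along_line[of X w t "(a, b)"] on_line[OF that] X'(1) W(1)
    by (simp add: differentiable_on_eq_differentiable_at)
  have \<tau>': "(\<tau> has_vector_derivative S) (at 0)"
    unfolding \<tau>_def[abs_def] S_def
    using X'(2,3) W by (intro has_vector_derivative_along_line_2 pv_pu_eq_pu_pv[OF W X'])
      (auto simp: differentiable_on_eq_differentiable_at)
  have y: "\<gamma> t $ 2 \<noteq> 0" if "\<bar>t\<bar> < d" for t
    using pos on_line[OF that] by (auto simp: \<gamma>_def)
  have "barrier \<delta> (\<gamma> t) \<le> barrier \<delta> (\<gamma> 0)" if "\<bar>t\<bar> < d" for t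
    using max on_line[OF that] W(2) by (simp add: \<gamma>_def zero_prod_def[symmetric])
  note critical = DERIV_local_max_second[OF d barrier_has_derivative_along[OF \<gamma>' y]
      barrier_grad_has_derivative_along[OF \<gamma>'[of 0] \<tau>' y] this]
  from critical d show "Hmetric (X w) (barrier_grad \<delta> (X w)) T = 0" and "barrier_hess \<delta> (X w) T T S \<le> 0"
    by (simp_all add: \<gamma>_def \<tau>_def T_def zero_prod_def[symmetric])
qed

section \<open>Tangent planes\<close>

lemma cross3_neq_0_if_independent:
  fixes u v :: "real^3"
  assumes indep: "\<forall>a b. a *\<^sub>R u + b *\<^sub>R v = 0 \<longrightarrow> a = 0 \<and> b = 0"
  shows "cross3 u v \<noteq> 0"
proof
  assume "cross3 u v = 0"
  then consider "u = 0" | "v = 0" | c where "v = c *\<^sub>R u"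
    using cross_eq_0 collinear_lemma by metis
  then show False
    using indep[rule_format, of 1 0] indep[rule_format, of 0 1] indep[rule_format, of _ "-1"]
    by cases auto
qed

lemma orthogonal_pair_parallel_cross3:
  fixes u v x :: "real^3"
  assumes "x \<bullet> u = 0" "x \<bullet> v = 0" and uv: "cross3 u v \<noteq> 0"
  obtains \<mu> where "x = \<mu> *\<^sub>R cross3 u v"
proof -
  have "cross3 x (cross3 u v) = 0"
    by (simp add: Lagrange assms)
  then consider "x = 0" | c where "cross3 u v = c *\<^sub>R x"
    using cross_eq_0 collinear_lemma uv by metis
  then show ?thesis
  proof cases
    case 1
    then show ?thesis
      using that[of 0] by simp
  next
    case (2 c)
    with uv have "c \<noteq> 0"
      by auto
    with 2 show ?thesis
      using that[of "1 / c"] by simp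
  qed
qed

lemma Hmetric_normal_parallel:
  fixes P U V N G :: "real^3"
  assumes y: "P$2 \<noteq> 0" and indep: "\<forall>a b. a *\<^sub>R U + b *\<^sub>R V = 0 \<longrightarrow> a = 0 \<and> b = 0"
    and N: "Hmetric P N U = 0" "Hmetric P N V = 0"
    and G: "Hmetric P G U = 0" "Hmetric P G V = 0" "G \<noteq> 0"
  obtains c where "N = c *\<^sub>R G"
proof -
  define lower :: "real^3 \<Rightarrow> real^3" where "lower T = vector [T$1 / (P$2)\<^sup>2, T$2 / (P$2)\<^sup>2, T$3]" for T
  have Hmetric_lower: "Hmetric P S T = lower S \<bullet> T" for S T
    by (simp add: Hmetric_def lower_def inner_vec_def sum_3 add_divide_distrib)
  have lower_eq_iff: "lower S = lower T \<longleftrightarrow> S = T" for S T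
    using y by (auto simp: lower_def vec_eq_iff forall_3)
  have lower_scaleR: "lower (c *\<^sub>R T) = c *\<^sub>R lower T" for c T
    by (simp add: lower_def vec_eq_iff forall_3)
  have UV: "cross3 U V \<noteq> 0"
    by (rule cross3_neq_0_if_independent[OF indep])
  obtain \<mu> where \<mu>: "lower N = \<mu> *\<^sub>R cross3 U V"
    using orthogonal_pair_parallel_cross3[OF _ _ UV] N by (metis Hmetric_lower)
  obtain \<nu> where \<nu>: "lower G = \<nu> *\<^sub>R cross3 U V"
    using orthogonal_pair_parallel_cross3[OF _ _ UV] G(1,2) by (metis Hmetric_lower)
  have "lower G \<noteq> lower 0"
    using G(3) lower_eq_iff by blast
  then have "\<nu> \<noteq> 0"
    using \<nu> lower_scaleR[of 0 G] by auto
  then have "lower N = lower ((\<mu> / \<nu>) *\<^sub>R G)"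
    by (simp add: \<mu> \<nu> lower_scaleR)
  then show ?thesis
    using that lower_eq_iff by blast
qed

lemma Hmetric_gram_det:
  fixes P U V :: "real^3"
  assumes y: "P$2 \<noteq> 0" and indep: "\<forall>a b. a *\<^sub>R U + b *\<^sub>R V = 0 \<longrightarrow> a = 0 \<and> b = 0"
  defines "E \<equiv> Hmetric P U U" and "F \<equiv> Hmetric P U V" and "G \<equiv> Hmetric P V V"
  shows "E * G - F\<^sup>2 > 0" and "E > 0"
    and "G * (U$3)\<^sup>2 - 2 * F * U$3 * V$3 + E * (V$3)\<^sup>2 \<le> E * G - F\<^sup>2"
proof -
  define w where "w = cross3 U V"
  define r where "r = 1 / (P$2)\<^sup>2"
  have r: "r > 0"
    using y by (simp add: r_def)
  have H: "Hmetric P S T = (S$1 * T$1 + S$2 * T$2) * r + S$3 * T$3" for S T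
    by (simp add: Hmetric_def r_def)
  have det: "E * G - F\<^sup>2 = (w$3)\<^sup>2 * r\<^sup>2 + ((w$1)\<^sup>2 + (w$2)\<^sup>2) * r"
    and vertical: "G * (U$3)\<^sup>2 - 2 * F * U$3 * V$3 + E * (V$3)\<^sup>2 = ((w$1)\<^sup>2 + (w$2)\<^sup>2) * r"
    unfolding E_def F_def G_def H w_def cross_components by algebra+
  have "w \<noteq> 0"
    unfolding w_def by (rule cross3_neq_0_if_independent[OF indep])
  then have "w$1 \<noteq> 0 \<or> w$2 \<noteq> 0 \<or> w$3 \<noteq> 0"
    by (simp add: vec_eq_iff forall_3)
  then show D: "E * G - F\<^sup>2 > 0"
    unfolding det using r
    by (smt (verit) mult_nonneg_nonneg mult_pos_pos zero_le_power2 zero_less_power2)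
  have "E \<ge> 0"
    unfolding E_def H using r by (simp add: add_nonneg_nonneg mult_nonneg_nonneg)
  with D show "E > 0"
    by (cases "E = 0") (auto simp: power2_eq_square)
  show "G * (U$3)\<^sup>2 - 2 * F * U$3 * V$3 + E * (V$3)\<^sup>2 \<le> E * G - F\<^sup>2"
    unfolding det vertical by simp
qed

lemma quadratic_form_trace_nonpos:
  fixes E F G q11 q12 q22 :: real
  assumes E: "E > 0" and D: "E * G - F\<^sup>2 > 0"
    and Q: "\<And>a b. a\<^sup>2 * q11 + 2 * a * b * q12 + b\<^sup>2 * q22 \<le> 0"
  shows "G * q11 - 2 * F * q12 + E * q22 \<le> 0"
proof -
  have "E * (G * q11 - 2 * F * q12 + E * q22)
      = ((- F)\<^sup>2 * q11 + 2 * (- F) * E * q12 + E\<^sup>2 * q22) + (E * G - F\<^sup>2) * q11"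
    by (simp add: algebra_simps power2_eq_square)
  also have "\<dots> \<le> 0"
    using Q[of "- F" E] Q[of 1 0] D by (simp add: add_nonpos_nonpos mult_nonneg_nonpos)
  finally show ?thesis
    using E by (simp add: mult_le_0_iff)
qed

section \<open>No interior maximum of the barrier on a soliton\<close>

lemma barrier_trace_pos:
  fixes k k2 y \<delta> D S :: real
  assumes "\<bar>k\<bar> \<le> \<delta>" "\<bar>k2\<bar> \<le> \<delta>" "y > 0" "4 * \<delta> \<le> 1 / y" and D: "D > 0" and S: "S \<le> D"
  shows "2 * (k + 1 / y) * D + (k2 - 1 / y) * S > 0"
proof -
  have "1 / y > 0"
    using assms(3) by simp
  with assms(1-4) have k2: "k2 - 1 / y \<le> 0" and pos: "2 * k + k2 + 1 / y > 0"
    unfolding abs_le_iff by linarith+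
  have "0 < (2 * k + k2 + 1 / y) * D"
    using pos D by simp
  also have "\<dots> = 2 * (k + 1 / y) * D + (k2 - 1 / y) * D"
    by (simp add: algebra_simps)
  also have "\<dots> \<le> 2 * (k + 1 / y) * D + (k2 - 1 / y) * S"
    using mult_left_mono_neg[OF S k2] by (rule add_left_mono)
  finally show ?thesis .
qed

lemma soliton_barrier_hess_trace:
  fixes P U V A M B N :: "real^3"
  defines "E \<equiv> Hmetric P U U" and "F \<equiv> Hmetric P U V" and "G \<equiv> Hmetric P V V"
  assumes y: "P$2 \<noteq> 0" and c: "c \<noteq> 0" and N: "N = c *\<^sub>R barrier_grad \<delta> P"
    and D: "E * G - F\<^sup>2 \<noteq> 0"
    and soliton: "(Hmetric P (A + Christ P U U) N * G - 2 * Hmetric P (M + Christ P U V) N * F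
        + Hmetric P (B + Christ P V V) N * E) / (2 * (E * G - F\<^sup>2)) = N$3"
  shows "G * barrier_hess \<delta> P U U A - 2 * F * barrier_hess \<delta> P U V M + E * barrier_hess \<delta> P V V B
    = 2 * (hump' \<delta> (P$3) + 1 / P$2) * (E * G - F\<^sup>2)
      + (hump'' \<delta> (P$3) - 1 / P$2) * (G * (U$3)\<^sup>2 - 2 * F * U$3 * V$3 + E * (V$3)\<^sup>2)"
proof -
  define e f g where "e = Hmetric P (A + Christ P U U) N" and "f = Hmetric P (M + Christ P U V) N"
    and "g = Hmetric P (B + Christ P V V) N"
  define k k2 where "k = hump' \<delta> (P$3)" and "k2 = hump'' \<delta> (P$3)"
  have mean_curvature: "e * G - 2 * f * F + g * E = 2 * (E * G - F\<^sup>2) * (c * k)"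
  proof -
    have "N$3 = c * k"
      by (simp add: N barrier_grad_def k_def)
    with soliton D show ?thesis
      by (simp add: e_def f_def g_def field_simps)
  qed
  have decomposition: "barrier_hess \<delta> P U U A = e / c + E / P$2 + (k2 - 1 / P$2) * (U$3 * U$3)"
    "barrier_hess \<delta> P U V M = f / c + F / P$2 + (k2 - 1 / P$2) * (U$3 * V$3)"
    "barrier_hess \<delta> P V V B = g / c + G / P$2 + (k2 - 1 / P$2) * (V$3 * V$3)"
    using barrier_hess_decomposition[OF y c]
    by (simp_all add: e_def f_def g_def E_def F_def G_def N k2_def mult.assoc)
  have "G * barrier_hess \<delta> P U U A - 2 * F * barrier_hess \<delta> P U V M + E * barrier_hess \<delta> P V V B
      = (e * G - 2 * f * F + g * E) / c + 2 * (E * G - F\<^sup>2) / P$2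
        + (k2 - 1 / P$2) * (G * (U$3)\<^sup>2 - 2 * F * U$3 * V$3 + E * (V$3)\<^sup>2)"
    unfolding decomposition using y c by (simp add: field_simps power2_eq_square)
  also have "\<dots> = 2 * (k + 1 / P$2) * (E * G - F\<^sup>2)
      + (k2 - 1 / P$2) * (G * (U$3)\<^sup>2 - 2 * F * U$3 * V$3 + E * (V$3)\<^sup>2)"
    unfolding mean_curvature using c by (simp add: field_simps)
  finally show ?thesis
    by (simp add: k_def k2_def)
qed

lemma soliton_chart_no_barrier_max:
  fixes X :: "real \<times> real \<Rightarrow> real^3" and N :: "real^3"
  assumes W: "open W" "w \<in> W" and X: "Cdiff 2 W X"
    and indep: "\<forall>a b. a *\<^sub>R pu X w + b *\<^sub>R pv X w = 0 \<longrightarrow> a = 0 \<and> b = 0"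
    and pos: "\<forall>w'\<in>W. X w' $ 2 > 0"
    and N: "Hmetric (X w) N N = 1" "Hmetric (X w) N (pu X w) = 0" "Hmetric (X w) N (pv X w) = 0"
    and soliton: "mean_curv X N w = N$3"
    and max: "\<forall>w'\<in>W. barrier \<delta> (X w') \<le> barrier \<delta> (X w)"
    and \<delta>: "0 \<le> \<delta>" "4 * \<delta> \<le> 1 / X w $ 2"
  shows False
proof -
  define P U V where "P = X w" and "U = pu X w" and "V = pv X w"
  define E F G where "E = Hmetric P U U" and "F = Hmetric P U V" and "G = Hmetric P V V"
  define k k2 where "k = hump' \<delta> (P$3)" and "k2 = hump'' \<delta> (P$3)"
  have y: "P$2 > 0"
    using pos W(2) by (simp add: P_def)
  note critical = barrier_max_in_chart[OF W X pos max, folded P_def U_def V_def]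
  have "Hmetric P (barrier_grad \<delta> P) U = 0" "Hmetric P (barrier_grad \<delta> P) V = 0"
    using critical(1)[of 1 0] critical(1)[of 0 1] by simp_all
  moreover have "barrier_grad \<delta> P \<noteq> 0"
    by (metis barrier_grad_def vector_3(2) zero_index zero_neq_neg_one)
  ultimately obtain c where Nc: "N = c *\<^sub>R barrier_grad \<delta> P"
    using Hmetric_normal_parallel[of P U V N "barrier_grad \<delta> P"] y indep N(2,3)
    by (auto simp: P_def U_def V_def)
  have c: "c \<noteq> 0"
    using N(1) Nc by (auto simp: P_def Hmetric_def)
  note gram = Hmetric_gram_det[of P U V, folded E_def F_def G_def]
  have D: "E * G - F\<^sup>2 > 0" and E: "E > 0"
    and vertical: "G * (U$3)\<^sup>2 - 2 * F * U$3 * V$3 + E * (V$3)\<^sup>2 \<le> E * G - F\<^sup>2"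
    using gram y indep by (simp_all add: U_def V_def)
  have trace_nonpos: "G * barrier_hess \<delta> P U U (pu (pu X) w) - 2 * F * barrier_hess \<delta> P U V (pu (pv X) w)
      + E * barrier_hess \<delta> P V V (pv (pv X) w) \<le> 0" (is "?trace \<le> 0")
    using quadratic_form_trace_nonpos[OF E D] critical(2) barrier_hess_quadratic by simp
  have trace: "?trace = 2 * (k + 1 / P$2) * (E * G - F\<^sup>2)
      + (k2 - 1 / P$2) * (G * (U$3)\<^sup>2 - 2 * F * U$3 * V$3 + E * (V$3)\<^sup>2)"
    using soliton_barrier_hess_trace[of P c N \<delta> U V] y c Nc D soliton
    unfolding mean_curv_def Let_def by (simp add: E_def F_def G_def k_def k2_def P_def U_def V_def)
  have "?trace > 0"
    unfolding trace using abs_hump'_le[OF \<delta>(1)] abs_hump''_le[OF \<delta>(1)] \<delta>(2) y D vertical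
    by (intro barrier_trace_pos) (simp_all add: k_def k2_def P_def)
  with trace_nonpos show False
    by simp
qed

section \<open>Existence of a maximum\<close>

lemma continuous_on_immersed_surface:
  fixes A :: "((real \<times> real) set \<times> (real \<times> real \<Rightarrow> 'm::t2_space)) set"
  assumes "immersed_surface A F"
  shows "continuous_on UNIV F"
proof -
  have "isCont F m" for m
  proof -
    obtain W p where chart: "(W, p) \<in> A" "m \<in> p ` W"
      using assms unfolding immersed_surface_def by blast
    then have "smooth_on2 W (F \<circ> p)" and "surface_chart W p"
      using assms by (auto simp: immersed_surface_def)
    then have Fp: "continuous_on W (F \<circ> p)"
      unfolding smooth_on2_def by (metis Cdiff.simps(1))
    obtain q where pq: "homeomorphism W (p ` W) p q" and "open (p ` W)"
      using \<open>surface_chart W p\<close> unfolding surface_chart_def by blast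
    then have "continuous_on (p ` W) q" "q ` p ` W = W" "\<forall>z\<in>p ` W. p (q z) = z"
      unfolding homeomorphism_def by auto
    then have "continuous_on (p ` W) ((F \<circ> p) \<circ> q)" and "\<forall>z\<in>p ` W. ((F \<circ> p) \<circ> q) z = F z"
      using continuous_on_compose[of "p ` W" q "F \<circ> p"] Fp by simp_all
    then have "continuous_on (p ` W) F"
      by (metis continuous_on_eq)
    then show ?thesis
      using continuous_on_eq_continuous_at[OF \<open>open (p ` W)\<close>] chart(2) by blast
  qed
  then show ?thesis
    by (simp add: continuous_at_imp_continuous_on)
qed

lemma closed_geodesic_disk_bounds:
  assumes c: "snd c > 0" and "(x, y) \<in> closed_geodesic_disk c r"
  shows "y > 0" and "y \<le> 2 * snd c * cosh r" and "snd c / (2 * cosh r) \<le> y"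
    and "\<bar>x - fst c\<bar> \<le> 2 * snd c * cosh r"
proof -
  define t where "t = 1 + ((x - fst c)\<^sup>2 + (y - snd c)\<^sup>2) / (2 * y * snd c)"
  show y: "y > 0"
    using assms(2) by (simp add: closed_geodesic_disk_def)
  have t: "t \<ge> 1"
    using y c by (simp add: t_def)
  have "arcosh t \<le> r"
    using assms(2) by (simp add: closed_geodesic_disk_def hdist_def t_def)
  then have "t \<le> cosh r"
    using cosh_real_nonneg_le_iff[of "arcosh t" r] arcosh_nonneg_real[OF t] t by simp
  then have "(x - fst c)\<^sup>2 + (y - snd c)\<^sup>2 \<le> 2 * y * snd c * (cosh r - 1)"
    using y c by (simp add: t_def field_simps)
  then have key: "(x - fst c)\<^sup>2 + y * y + snd c * snd c \<le> 2 * y * snd c * cosh r"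
    by (simp add: power2_diff algebra_simps power2_eq_square)
  have squares: "0 \<le> (x - fst c)\<^sup>2" "0 \<le> y * y" "0 \<le> snd c * snd c"
    by simp_all
  have rearrange: "y * (2 * snd c * cosh r) = 2 * y * snd c * cosh r"
    "snd c * (2 * cosh r * y) = 2 * y * snd c * cosh r"
    by simp_all
  have "y * y \<le> y * (2 * snd c * cosh r)"
    using key squares rearrange by linarith
  then show ymax: "y \<le> 2 * snd c * cosh r"
    using y by simp
  have "snd c * snd c \<le> snd c * (2 * cosh r * y)"
    using key squares rearrange by linarith
  then have "snd c \<le> 2 * cosh r * y"
    using c by simp
  then show "snd c / (2 * cosh r) \<le> y"
    using cosh_real_pos[of r] by (simp add: divide_le_eq mult.commute)
  have "(x - fst c)\<^sup>2 \<le> y * (2 * snd c * cosh r)"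
    using key squares rearrange by linarith
  also have "\<dots> \<le> (2 * snd c * cosh r)\<^sup>2"
    using ymax y c cosh_real_pos[of r] by (simp add: power2_eq_square mult_right_mono)
  finally have "\<bar>x - fst c\<bar> \<le> \<bar>2 * snd c * cosh r\<bar>"
    by (simp only: abs_le_square_iff)
  then show "\<bar>x - fst c\<bar> \<le> 2 * snd c * cosh r"
    using c cosh_real_pos[of r] by simp
qed

lemma continuous_on_barrier:
  assumes "continuous_on UNIV F" and "\<And>m. F m $ 2 \<noteq> 0"
  shows "continuous_on UNIV (\<lambda>m. barrier \<delta> (F m))"
  unfolding barrier_def hump_def using assms by (intro continuous_intros) auto

lemma compact_barrier_superlevel:
  fixes F :: "'m::topological_space \<Rightarrow> real^3"
  assumes proper: "proper_into_H2R F" and cont: "continuous_on UNIV F"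
    and bounds: "\<And>m. ymin \<le> F m $ 2" "\<And>m. F m $ 2 \<le> ymax" "\<And>m. \<bar>F m $ 1 - x0\<bar> \<le> R"
    and ymin: "ymin > 0" and \<delta>: "\<delta> > 0"
  shows "compact {m. l \<le> barrier \<delta> (F m)}"
proof -
  define Z where "Z = (1 / ymin - l) / \<delta>"
  define K :: "(real^3) set" where "K = cbox (vector [x0 - R, ymin, - Z]) (vector [x0 + R, ymax, Z])"
  have "{m. l \<le> barrier \<delta> (F m)} \<subseteq> F -` K"
  proof
    fix m
    assume m: "m \<in> {m. l \<le> barrier \<delta> (F m)}"
    have "1 / F m $ 2 \<le> 1 / ymin"
      using bounds(1)[of m] ymin by (simp add: frac_le)
    then have "\<delta> * \<bar>F m $ 3\<bar> \<le> 1 / ymin - l"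
      using hump_le[of \<delta> "F m $ 3"] \<delta> m by (simp add: barrier_def)
    then have "\<bar>F m $ 3\<bar> \<le> Z"
      using \<delta> by (simp add: Z_def pos_le_divide_eq mult.commute)
    with bounds[of m] show "m \<in> F -` K"
      by (simp add: K_def mem_box_cart forall_3 abs_le_iff)
  qed
  moreover have "K \<subseteq> {q. 0 < q $ 2}"
  proof
    fix q
    assume "q \<in> K"
    then have "ymin \<le> q $ 2"
      unfolding K_def mem_box_cart by (metis vector_3(2))
    with ymin show "q \<in> {q. 0 < q $ 2}"
      by simp
  qed
  then have "compact (F -` K)"
    using proper compact_cbox unfolding proper_into_H2R_def K_def by blast
  moreover have "F m $ 2 \<noteq> 0" for m
    using bounds(1)[of m] ymin by linarith
  then have "closed {m. l \<le> barrier \<delta> (F m)}"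
    by (intro closed_Collect_le continuous_on_const continuous_on_barrier[OF cont])
  ultimately show ?thesis
    by (metis compact_Int_closed inf.absorb_iff2)
qed

lemma proper_barrier_attains_max:
  fixes F :: "'m::topological_space \<Rightarrow> real^3"
  assumes proper: "proper_into_H2R F" and cont: "continuous_on UNIV F"
    and bounds: "\<And>m. ymin \<le> F m $ 2" "\<And>m. F m $ 2 \<le> ymax" "\<And>m. \<bar>F m $ 1 - x0\<bar> \<le> R"
    and ymin: "ymin > 0" and \<delta>: "\<delta> > 0"
  obtains m where "\<And>m'. barrier \<delta> (F m') \<le> barrier \<delta> (F m)"
proof -
  define m0 :: 'm where "m0 = undefined"
  define S where "S = {m. barrier \<delta> (F m0) \<le> barrier \<delta> (F m)}"
  have "compact S" and "m0 \<in> S"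
    unfolding S_def using compact_barrier_superlevel[OF assms] by simp_all
  moreover have "F m $ 2 \<noteq> 0" for m
    using bounds(1)[of m] ymin by linarith
  then have "continuous_on S (\<lambda>m. barrier \<delta> (F m))"
    by (rule continuous_on_subset[OF continuous_on_barrier[OF cont]]) simp
  ultimately obtain m where "m \<in> S" "\<forall>m'\<in>S. barrier \<delta> (F m') \<le> barrier \<delta> (F m)"
    using continuous_attains_sup by blast
  then have "barrier \<delta> (F m') \<le> barrier \<delta> (F m)" for m'
    by (cases "m' \<in> S") (auto simp: S_def)
  then show ?thesis
    by (rule that)
qed

theorem theorem5p9:
  fixes A :: "((real \<times> real) set \<times> (real \<times> real \<Rightarrow> 'm::{t2_space, second_countable_topology})) set"
    and F :: "'m \<Rightarrow> real^3" and \<eta> :: "'m \<Rightarrow> real^3"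
    and c :: "real \<times> real" and r :: real
  assumes "immersed_surface A F"
    and "unit_normal A F \<eta>"
    and "proper_into_H2R F"
    and "translating_soliton A F \<eta>"
    and "snd c > 0" and "r > 0"
    and "\<forall>m. ((F m)$1, (F m)$2) \<in> closed_geodesic_disk c r"
  shows False
proof -
  define ymax where "ymax = 2 * snd c * cosh r"
  have ymax: "ymax > 0"
    using assms(5) cosh_real_ge_1[of r] by (simp add: ymax_def)
  note disk = closed_geodesic_disk_bounds[OF assms(5) assms(7)[rule_format], folded ymax_def]
  define \<delta> where "\<delta> = 1 / (4 * ymax)"
  obtain m where max: "\<And>m'. barrier \<delta> (F m') \<le> barrier \<delta> (F m)"
    by (rule proper_barrier_attains_max[where \<delta> = \<delta>, OF assms(3) continuous_on_immersed_surface[OF assms(1)]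
          disk(3,2,4)]) (use assms(5) cosh_real_ge_1[of r] ymax in \<open>auto simp: \<delta>_def\<close>)
  from assms(1) obtain W p w where chart: "(W, p) \<in> A" "w \<in> W" "m = p w"
    unfolding immersed_surface_def by blast
  show False
  proof (rule soliton_chart_no_barrier_max[of W w "F \<circ> p" "\<eta> m" \<delta>])
    show "4 * \<delta> \<le> 1 / (F \<circ> p) w $ 2"
      using disk(2)[of m] disk(1)[of m] ymax chart by (simp add: \<delta>_def frac_le)
  qed (use assms(1,2,4) chart max in \<open>auto simp: immersed_surface_def surface_chart_def
      smooth_on2_def unit_normal_def translating_soliton_def \<delta>_def less_imp_le ymax\<close>)
qed

end
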